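(* Let $n\ge 2$ and $\lambda>0$. For each $k=1,\ldots,n$, let $\tau^k_1,\ldots,\tau^k_n$ be i.i.d. random variables with distribution $\mathrm{Erlang}(2,\lambda)$, and let $T_k=\frac{1}{n}\sum_{m=1}^n\tau^k_m-\frac{2}{\lambda}$. Then $$\Pr\left(\max_{1\le k\le n}|T_k|\le \frac{\ln n}{\lambda\sqrt n}\right)\ \ge\ \Psi(n),$$ where $$\Psi(n)=\max\left\{0,\ 1-\left(1-\frac{\ln n}{2\sqrt n}\right)^{2n}n^{1+\sqrt n}-\left(1+\frac{\ln n}{2\sqrt n}\right)^{2n}n^{1-\sqrt n}\right\}.$$ Moreover, $\Psi(n)\to 1$ as $n\to\infty$.
   Context: $\mathrm{Erlang}(2,\lambda)$ denotes the distribution of the sum of two independent exponential random variables with parameter $\lambda$. No independence between the families $(\tau^k_m)_m$ for different $k$ is assumed. *)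

theory Defs
  imports "HOL-Probability.Probability"
begin

text \<open>Psi(n) from the paper. Note erlang_density k l is the Erlang density with shape k+1,
  so Erlang(2,l) is erlang_density 1 l.\<close>
definition Psi :: "nat \<Rightarrow> real" where
  "Psi n = max 0 (1 - (1 - ln (real n) / (2 * sqrt (real n))) ^ (2 * n) * real n powr (1 + sqrt (real n))
                     - (1 + ln (real n) / (2 * sqrt (real n))) ^ (2 * n) * real n powr (1 - sqrt (real n)))"

end

theory Submission
  imports Defs "HOL-Real_Asymp.Real_Asymp"
begin

text \<open>Each row sum \<open>S\<^sub>k\<close> is Erlang distributed with shape \<open>2n\<close>, with moment generating
  function \<open>(l / (l - t))^(2n)\<close>. Chernoff's bound at the optimal \<open>t\<close> bounds the probability that
  \<open>S\<^sub>k\<close> exceeds \<open>(1 + d) 2n / l\<close>, resp. falls below \<open>(1 - d) 2n / l\<close>, by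
  \<open>(1 + d)^(2n) e^(-2nd)\<close>, resp. \<open>(1 - d)^(2n) e^(2nd)\<close>. For \<open>d = ln n / (2 sqrt n)\<close> one has
  \<open>e^(2nd) = n^(sqrt n)\<close>, and a union bound over the \<open>n\<close> rows gives \<open>Psi n\<close>; no independence
  between different rows is needed.\<close>

lemma erlang_density_mult_exp:
  assumes "t < l"
  shows "erlang_density k l y * exp (t * y) = (l / (l - t)) ^ Suc k * erlang_density k (l - t) y"
proof (cases "y < 0")
  case True
  then show ?thesis by (simp add: erlang_density_def)
next
  case False
  have "exp (- l * y) * exp (t * y) = exp (- (l - t) * y)"
    by (simp add: exp_add[symmetric] algebra_simps)
  with False assms show ?thesis
    by (simp add: erlang_density_def power_divide field_simps)
qed

lemma nn_integral_erlang_mult_exp: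
  assumes "0 < l" "t < l"
  shows "(\<integral>\<^sup>+y. ennreal (erlang_density k l y * exp (t * y)) \<partial>lborel) = ennreal ((l / (l - t)) ^ Suc k)"
proof -
  have "(\<integral>\<^sup>+y. ennreal (erlang_density k l y * exp (t * y)) \<partial>lborel)
      = ennreal ((l / (l - t)) ^ Suc k) * (\<integral>\<^sup>+y. ennreal (erlang_density k (l - t) y) \<partial>lborel)"
    using assms
    by (subst nn_integral_cmult[symmetric])
       (simp_all add: erlang_density_mult_exp ennreal_mult[symmetric])
  also have "(\<integral>\<^sup>+y. ennreal (erlang_density k (l - t) y) \<partial>lborel) = 1"
    using nn_integral_erlang_ith_moment[of "l - t" k 0] assms by simp
  finally show ?thesis by simp
qed

lemma erlang_chernoff_bound:
  assumes "prob_space M" and X: "distributed M lborel X (erlang_density k l)"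
    and l: "0 < l" "t < l" and A: "A \<in> sets borel"
    and exp_ge_1: "\<And>y. y \<in> A \<Longrightarrow> 1 \<le> exp (t * (y - x))"
  shows "measure M (X -` A \<inter> space M) \<le> exp (- t * x) * (l / (l - t)) ^ Suc k"
proof -
  interpret prob_space M by fact
  have "emeasure M (X -` A \<inter> space M) = (\<integral>\<^sup>+y. ennreal (erlang_density k l y) * indicator A y \<partial>lborel)"
    using distributed_emeasure[OF X] A by simp
  also have "\<dots> \<le> (\<integral>\<^sup>+y. ennreal (exp (- t * x)) * ennreal (erlang_density k l y * exp (t * y)) \<partial>lborel)"
  proof (intro nn_integral_mono)
    fix y
    have "indicator A y \<le> exp (- t * x) * exp (t * y)"
      using exp_ge_1[of y] by (auto simp: indicator_def exp_add[symmetric] algebra_simps)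
    then have "erlang_density k l y * indicator A y \<le> erlang_density k l y * (exp (- t * x) * exp (t * y))"
      using l by (intro mult_left_mono) auto
    then show "ennreal (erlang_density k l y) * indicator A y
        \<le> ennreal (exp (- t * x)) * ennreal (erlang_density k l y * exp (t * y))"
      using l by (simp add: ennreal_mult[symmetric] ennreal_indicator[symmetric] mult_ac del: ennreal_indicator)
  qed
  also have "\<dots> = ennreal (exp (- t * x)) * ennreal ((l / (l - t)) ^ Suc k)"
    by (simp add: nn_integral_cmult nn_integral_erlang_mult_exp l)
  also have "\<dots> = ennreal (exp (- t * x) * (l / (l - t)) ^ Suc k)"
    using l by (intro ennreal_mult[symmetric]) auto
  finally show ?thesis
    using l by (simp add: emeasure_eq_measure)
qed

lemma erlang_upper_tail:
  fixes d :: real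
  assumes "prob_space M" "distributed M lborel X (erlang_density k l)" "0 < l" "0 \<le> d"
  shows "measure M (X -` {Suc k * (1 + d) / l..} \<inter> space M) \<le> (1 + d) ^ Suc k * exp (- (Suc k * d))"
proof -
  define t where "t = l * d / (1 + d)"
  have "t < l" "0 \<le> t"
    using assms by (simp_all add: t_def field_simps)
  then have "measure M (X -` {Suc k * (1 + d) / l..} \<inter> space M)
      \<le> exp (- t * (Suc k * (1 + d) / l)) * (l / (l - t)) ^ Suc k"
    using assms by (intro erlang_chernoff_bound) auto
  also have "\<dots> = (1 + d) ^ Suc k * exp (- (Suc k * d))"
  proof -
    have "l + d * l > 0"
      using assms by (simp add: add_pos_nonneg)
    then have "t * (Suc k * (1 + d) / l) = Suc k * d" "l / (l - t) = 1 + d"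
      using assms by (simp_all add: t_def field_simps)
    then show ?thesis by (simp add: mult_ac)
  qed
  finally show ?thesis .
qed

lemma erlang_lower_tail:
  fixes d :: real
  assumes "prob_space M" "distributed M lborel X (erlang_density k l)" "0 < l" "0 \<le> d" "d < 1"
  shows "measure M (X -` {..Suc k * (1 - d) / l} \<inter> space M) \<le> (1 - d) ^ Suc k * exp (Suc k * d)"
proof -
  define t where "t = - (l * d / (1 - d))"
  have "t < l" "t \<le> 0"
    using assms by (simp_all add: t_def field_simps)
  then have "measure M (X -` {..Suc k * (1 - d) / l} \<inter> space M)
      \<le> exp (- t * (Suc k * (1 - d) / l)) * (l / (l - t)) ^ Suc k"
    using assms by (intro erlang_chernoff_bound) (auto intro: mult_nonpos_nonpos)
  also have "\<dots> = (1 - d) ^ Suc k * exp (Suc k * d)"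
  proof -
    have "l - d * l > 0"
      using assms by (simp add: algebra_simps)
    then have "t * (Suc k * (1 - d) / l) = - (Suc k * d)" "l / (l - t) = 1 - d"
      using assms by (simp_all add: t_def field_simps)
    then show ?thesis by (simp add: mult_ac)
  qed
  finally show ?thesis .
qed

lemma erlang_deviation_bound:
  fixes d :: real
  assumes "prob_space M" and X: "distributed M lborel X (erlang_density k l)"
    and "0 < l" "0 \<le> d" "d < 1"
  shows "measure M {\<omega> \<in> space M. Suc k * d / l < \<bar>X \<omega> - Suc k / l\<bar>}
           \<le> (1 + d) ^ Suc k * exp (- (Suc k * d)) + (1 - d) ^ Suc k * exp (Suc k * d)"
proof -
  interpret prob_space M by fact
  define U where "U = X -` {Suc k * (1 + d) / l..} \<inter> space M"
  define L where "L = X -` {..Suc k * (1 - d) / l} \<inter> space M"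
  have thresholds: "Suc k * (1 + d) / l = Suc k / l + Suc k * d / l"
    "Suc k * (1 - d) / l = Suc k / l - Suc k * d / l"
    using \<open>0 < l\<close> by (simp_all add: field_simps)
  have [measurable]: "X \<in> borel_measurable M"
    using distributed_measurable[OF X] by simp
  have "{\<omega> \<in> space M. Suc k * d / l < \<bar>X \<omega> - Suc k / l\<bar>} \<subseteq> U \<union> L"
    unfolding U_def L_def thresholds by (auto simp: abs_if split: if_splits)
  then have "measure M {\<omega> \<in> space M. Suc k * d / l < \<bar>X \<omega> - Suc k / l\<bar>} \<le> measure M (U \<union> L)"
    unfolding U_def L_def by (intro finite_measure_mono) measurable
  also have "\<dots> \<le> measure M U + measure M L"
    unfolding U_def L_def by (intro measure_subadditive) measurable
  also have "\<dots> \<le> (1 + d) ^ Suc k * exp (- (Suc k * d)) + (1 - d) ^ Suc k * exp (Suc k * d)"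
    unfolding U_def L_def using assms by (intro add_mono erlang_upper_tail erlang_lower_tail)
  finally show ?thesis .
qed

lemma (in prob_space) prob_UN_le_card_mult:
  fixes b :: real
  assumes "finite I" "\<And>i. i \<in> I \<Longrightarrow> A i \<in> events" "\<And>i. i \<in> I \<Longrightarrow> prob (A i) \<le> b"
  shows "prob (\<Union>i\<in>I. A i) \<le> card I * b"
proof -
  have "prob (\<Union>i\<in>I. A i) \<le> (\<Sum>i\<in>I. prob (A i))"
    using assms by (intro finite_measure_subadditive_finite) auto
  also have "\<dots> \<le> card I * b"
    using assms(3) by (rule sum_bounded_above)
  finally show ?thesis .
qed

lemma ln_less_two_sqrt:
  assumes "0 < x"
  shows "ln x < 2 * sqrt x"
proof -
  have "ln x = 2 * ln (sqrt x)"
    using assms by (simp add: ln_sqrt)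
  also have "ln (sqrt x) \<le> sqrt x - 1"
    using assms by (intro ln_le_minus_one) simp
  finally show ?thesis by simp
qed

lemma abs_mean_sub_le_iff:
  fixes x c r N :: real
  assumes "0 < N"
  shows "\<bar>(1 / N) * x - c\<bar> \<le> r \<longleftrightarrow> \<bar>x - N * c\<bar> \<le> N * r"
proof -
  have "(1 / N) * x - c = (x - N * c) / N"
    using assms by (simp add: field_simps)
  then show ?thesis
    using assms by (simp add: abs_divide pos_divide_le_eq mult_ac)
qed

lemma Psi_eq:
  assumes "0 < n" and d: "d = ln (real n) / (2 * sqrt (real n))"
  shows "Psi n = max 0 (1 - real n * ((1 + d) ^ (2 * n) * exp (- (2 * n * d))
                                         + (1 - d) ^ (2 * n) * exp (2 * n * d)))"
proof -
  have "2 * n * d = real n / sqrt (real n) * ln (real n)"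
    by (simp add: d)
  also have "real n / sqrt (real n) = sqrt (real n)"
    by (rule real_div_sqrt) simp
  finally have "2 * n * d = sqrt (real n) * ln (real n)" .
  then have exp_eq: "exp (2 * n * d) = real n powr sqrt (real n)"
    using assms by (simp add: powr_def)
  have "real n * ((1 + d) ^ (2 * n) * exp (- (2 * n * d)) + (1 - d) ^ (2 * n) * exp (2 * n * d))
      = (1 - d) ^ (2 * n) * real n powr (1 + sqrt (real n))
        + (1 + d) ^ (2 * n) * real n powr (1 - sqrt (real n))"
    unfolding exp_minus exp_eq using assms by (simp add: powr_add powr_diff field_simps)
  then show ?thesis
    by (simp add: Psi_def d)
qed

lemma Psi_tendsto_1: "Psi \<longlonglongrightarrow> 1"
proof -
  have "(\<lambda>n::nat. (1 - ln (real n) / (2 * sqrt (real n))) ^ (2 * n) * real n powr (1 + sqrt (real n))) \<longlonglongrightarrow> 0"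
       "(\<lambda>n::nat. (1 + ln (real n) / (2 * sqrt (real n))) ^ (2 * n) * real n powr (1 - sqrt (real n))) \<longlonglongrightarrow> 0"
    by real_asymp+
  then have "Psi \<longlonglongrightarrow> max 0 (1 - 0 - 0)"
    unfolding Psi_def[abs_def] by (intro tendsto_intros)
  then show ?thesis by simp
qed

theorem theorem5:
  fixes M :: "'a measure" and \<tau> :: "nat \<Rightarrow> nat \<Rightarrow> 'a \<Rightarrow> real" and n :: nat and l :: real
  assumes "prob_space M"
    and "n \<ge> 2" and "l > 0"
    and "\<And>k m. k \<in> {1..n} \<Longrightarrow> m \<in> {1..n} \<Longrightarrow>
           distributed M lborel (\<tau> k m) (erlang_density 1 l)"
    and "\<And>k. k \<in> {1..n} \<Longrightarrow> prob_space.indep_vars M (\<lambda>_. borel) (\<tau> k) {1..n}"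
  shows "measure M {\<omega> \<in> space M.
            (MAX k\<in>{1..n}. \<bar>(1 / real n) * (\<Sum>m=1..n. \<tau> k m \<omega>) - 2 / l\<bar>)
              \<le> ln (real n) / (l * sqrt (real n))} \<ge> Psi n
         \<and> Psi \<longlonglongrightarrow> 1"
proof
  show "Psi \<longlonglongrightarrow> 1" by (rule Psi_tendsto_1)
next
  interpret prob_space M by fact
  define d where "d = ln (real n) / (2 * sqrt (real n))"
  define S where "S k \<omega> = (\<Sum>m=1..n. \<tau> k m \<omega>)" for k \<omega>
  define A where "A k = {\<omega> \<in> space M. 2 * n * d / l < \<bar>S k \<omega> - 2 * n / l\<bar>}" for k
  define b where "b = (1 + d) ^ (2 * n) * exp (- (2 * n * d)) + (1 - d) ^ (2 * n) * exp (2 * n * d)"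
  have d: "0 \<le> d" "d < 1"
    using assms(2) ln_less_two_sqrt[of "real n"] by (auto simp: d_def)
  have two_n: "Suc (2 * n - 1) = 2 * n"
    using assms(2) by simp
  have S: "distributed M lborel (S k) (erlang_density (2 * n - 1) l)" if "k \<in> {1..n}" for k
    using erlang_distributed_sum[where I="{1..n}" and X="\<tau> k" and k="\<lambda>_. 1" and l=l] assms(2-5) that two_n
    by (simp add: S_def[abs_def] mult_2)
  have A: "A k \<in> events" "prob (A k) \<le> b" if "k \<in> {1..n}" for k
    using erlang_deviation_bound[OF assms(1) S[OF that] assms(3) d] distributed_measurable[OF S[OF that]]
    unfolding two_n A_def b_def by (auto simp: algebra_simps)
  have "{\<omega> \<in> space M.
      (MAX k\<in>{1..n}. \<bar>(1 / real n) * (\<Sum>m=1..n. \<tau> k m \<omega>) - 2 / l\<bar>) \<le> ln (real n) / (l * sqrt (real n))}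
      = space M - (\<Union>k\<in>{1..n}. A k)" (is "?E = _")
  proof -
    have "\<bar>(1 / real n) * S k \<omega> - 2 / l\<bar> \<le> ln (real n) / (l * sqrt (real n))
        \<longleftrightarrow> \<not> 2 * n * d / l < \<bar>S k \<omega> - 2 * n / l\<bar>" for k \<omega>
      using abs_mean_sub_le_iff[of n "S k \<omega>" "2 / l" "ln (real n) / (l * sqrt (real n))"] assms(2)
      by (simp add: d_def not_less mult_ac)
    then show ?thesis
      using assms(2) by (auto simp: A_def Max_le_iff S_def)
  qed
  moreover have "1 - real n * b \<le> prob (space M - (\<Union>k\<in>{1..n}. A k))"
    using prob_UN_le_card_mult[of "{1..n}" A b] A by (simp add: prob_compl sets.finite_UN)
  ultimately show "prob ?E \<ge> Psi n"
    using Psi_eq[of n d] assms(2) by (simp add: d_def b_def)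
qed

end
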